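(* Let $r\geq 2$, $0<c\leq 1/2$, let $H$ be a graph with vertex set $\{v_1,\ldots,v_r\}$, and let $G$ be a graph of order $n$. If $M\subset H(G)$ and $|M|\geq cn^{r}$, then $M$ covers an induced subgraph of $G$ of type $H(s,\ldots,s,t)$ with $s=\lfloor c^{r^{2}}\ln n\rfloor$ and $t$ an integer with $t>n^{1-c^{r-1}}$.
   Context: $H(G)$ is the set of injections $h:V(H)\to V(G)$ such that for all distinct $u,v\in V(H)$, $\{u,v\}\in E(H)$ if and only if $\{h(u),h(v)\}\in E(G)$. For a graph $H$ with vertices $v_1,\ldots,v_r$ and positive integers $x_1,\ldots,x_r$, $H(x_1,\ldots,x_r)$ denotes the graph obtained by replacing each vertex $v_i$ with a set $V_{v_i}$ of $x_i$ vertices (pairwise disjoint, each independent) and each edge $v_iv_j\in E(H)$ with a complete bipartite graph between $V_{v_i}$ and $V_{v_j}$. A graph is of type $H(x_1,\ldots,x_r)$ if it is obtained from $H(x_1,\ldots,x_r)$ by adding some edges within the sets $V_{v_i}$; in $H(s,\ldots,s,t)$ the classes of $v_1,\ldots,v_{r-1}$ have size $s$ and that of $v_r$ has size $t$. Let $Y$ be a subgraph of $G$ of type $H(s_1,\ldots,s_r)$ with designated vertex classes, and let $s=\min\{s_1,\ldots,s_r\}$. A set $M\subset H(G)$ covers $Y$ if: (a) for every edge $ij$ of $Y$ joining two different vertex classes of $Y$, there exist $h\in M$ and an edge $uv\in E(H)$ with $\{h(u),h(v)\}=\{i,j\}$; and (b) there exist $h_1,\ldots,h_s\in M$ such that the images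 $h_i(V(H))$ are pairwise disjoint for $i\neq j$ and, for every $i\in[s]$, $h_i(V(H))$ intersects every vertex class of $Y$. $\ln$ is the natural logarithm. *)

theory Defs
  imports "HOL-Analysis.Analysis" "HOL-Library.FuncSet"
begin

text \<open>A (simple) graph: finite vertex set V with a symmetric irreflexive adjacency
  relation E (only its restriction to V matters).\<close>
definition graph :: "'a set \<Rightarrow> ('a \<Rightarrow> 'a \<Rightarrow> bool) \<Rightarrow> bool" where
  "graph V E \<longleftrightarrow> finite V \<and> (\<forall>x\<in>V. \<forall>y\<in>V. E x y \<longleftrightarrow> E y x) \<and> (\<forall>x\<in>V. \<not> E x x)"

text \<open>H has vertex set {0..<r} (vertex v_i is i-1), adjacency EH.
  Maps are extensional so that distinct elements of H(G) are distinct functions.\<close>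
definition induced_copies ::
  "nat \<Rightarrow> (nat \<Rightarrow> nat \<Rightarrow> bool) \<Rightarrow> 'a set \<Rightarrow> ('a \<Rightarrow> 'a \<Rightarrow> bool) \<Rightarrow> (nat \<Rightarrow> 'a) set" where
  "induced_copies r EH V E =
     {h \<in> {0..<r} \<rightarrow>\<^sub>E V. inj_on h {0..<r} \<and>
        (\<forall>u<r. \<forall>v<r. u \<noteq> v \<longrightarrow> (EH u v \<longleftrightarrow> E (h u) (h v)))}"

text \<open>X :: nat \<Rightarrow> 'a set gives the designated vertex classes X 0, ..., X (r-1)
  (class of v_{i+1} is X i). Edges inside classes are arbitrary (those of G).\<close>
definition induced_of_type ::
  "nat \<Rightarrow> (nat \<Rightarrow> nat \<Rightarrow> bool) \<Rightarrow> 'a set \<Rightarrow> ('a \<Rightarrow> 'a \<Rightarrow> bool) \<Rightarrow> (nat \<Rightarrow> nat) \<Rightarrow> (nat \<Rightarrow> 'a set) \<Rightarrow> bool" where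
  "induced_of_type r EH V E sz X \<longleftrightarrow>
     (\<forall>i<r. X i \<subseteq> V \<and> finite (X i) \<and> card (X i) = sz i) \<and>
     (\<forall>i<r. \<forall>j<r. i \<noteq> j \<longrightarrow> X i \<inter> X j = {}) \<and>
     (\<forall>i<r. \<forall>j<r. i \<noteq> j \<longrightarrow> (\<forall>x\<in>X i. \<forall>y\<in>X j. E x y \<longleftrightarrow> EH i j))"

definition covers ::
  "nat \<Rightarrow> (nat \<Rightarrow> nat \<Rightarrow> bool) \<Rightarrow> ('a \<Rightarrow> 'a \<Rightarrow> bool) \<Rightarrow> (nat \<Rightarrow> 'a) set \<Rightarrow> (nat \<Rightarrow> nat) \<Rightarrow> (nat \<Rightarrow> 'a set) \<Rightarrow> bool" where
  "covers r EH E M sz X \<longleftrightarrow>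
     (\<forall>a<r. \<forall>b<r. a \<noteq> b \<longrightarrow> (\<forall>x\<in>X a. \<forall>y\<in>X b. E x y \<longrightarrow>
        (\<exists>h\<in>M. \<exists>u<r. \<exists>v<r. EH u v \<and> {h u, h v} = {x, y}))) \<and>
     (\<exists>f :: nat \<Rightarrow> nat \<Rightarrow> 'a. (\<forall>k < Min (sz ` {0..<r}). f k \<in> M) \<and>
        (\<forall>k < Min (sz ` {0..<r}). \<forall>l < Min (sz ` {0..<r}). k \<noteq> l \<longrightarrow>
            f k ` {0..<r} \<inter> f l ` {0..<r} = {}) \<and>
        (\<forall>k < Min (sz ` {0..<r}). \<forall>a<r. f k ` {0..<r} \<inter> X a \<noteq> {}))"

end

theory Submission
  imports Defs
begin

text \<open>
  The copies in M are grown one coordinate at a time. A map q on {0..<k} is a rich prefix if it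
  has at least 2n/B one-point extensions that are rich prefixes on {0..<k+1}, the rich prefixes on
  {0..<r} being the copies in M. Discarding the other prefixes costs at most 2n^k/B per level, so
  for B of order r/c at least cn/2 single vertices are rich. Inductively one finds families of
  s B^(r-k) rich prefixes of length k with pairwise disjoint images, any two of which are
  compatible in all distinct positions: a Kovari-Sos-Turan averaging argument (Jensen's inequality
  for binomial coefficients) picks m = s B^(r-k-1) members with at least n/B^m common rich
  extensions, enough to extend them by distinct vertices. At length r-1 this gives s prefixes
  whose common extensions T inside M number more than n^(1-c^(r-1)). The i-th coordinates of
  the s prefixes form class i < r-1, T forms the last class, and completing the s prefixes by
  distinct vertices of T gives the disjoint copies required by the covering. The bound
  s \<le> c^(r^2) ln n is what keeps n/B^m \<ge> m at every step.
\<close>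

section \<open>Double counting and averaging\<close>

lemma card_filter_eq_sum_of_bool:
  "finite A \<Longrightarrow> card {x\<in>A. P x} = (\<Sum>x\<in>A. of_bool (P x))"
  by (simp add: Int_def conj_commute)

lemma sum_card_filter_swap:
  assumes "finite A" "finite B"
  shows "(\<Sum>x\<in>A. card {y\<in>B. R x y}) = (\<Sum>y\<in>B. card {x\<in>A. R x y})"
  unfolding card_filter_eq_sum_of_bool[OF assms(1)] card_filter_eq_sum_of_bool[OF assms(2)]
  by (rule sum.swap)

lemma convex_on_power_nonneg: "convex_on {0::real..} (\<lambda>x. x ^ m)"
  by (cases "even m")
    (auto intro: convex_on_subset[OF convex_power_even] convex_power_odd)

lemma power_mean_le_sum_power:
  fixes y :: "'b \<Rightarrow> real"
  assumes "finite S" "S \<noteq> {}" "\<And>i. i \<in> S \<Longrightarrow> 0 \<le> y i"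
  shows "card S * ((\<Sum>i\<in>S. y i) / card S) ^ m \<le> (\<Sum>i\<in>S. y i ^ m)"
proof -
  let ?N = "real (card S)"
  have N: "?N > 0" using assms by auto
  have "(\<Sum>i\<in>S. (1/?N) *\<^sub>R y i) ^ m \<le> (\<Sum>i\<in>S. (1/?N) * y i ^ m)"
    using convex_on_sum[OF assms(1,2) convex_on_power_nonneg, of "\<lambda>i. 1/?N" y] assms N by auto
  then have "((\<Sum>i\<in>S. y i) / ?N) ^ m \<le> (\<Sum>i\<in>S. y i ^ m) / ?N"
    by (simp add: sum_divide_distrib)
  then show ?thesis using N by (simp add: field_simps)
qed

lemma power_le_binomial_fact:
  assumes "m \<ge> 1"
  shows "(max (real d - (real m - 1)) 0) ^ m \<le> real (d choose m) * fact m"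
proof (cases "m \<le> d + 1")
  case False
  then show ?thesis using assms by (simp add: zero_power)
next
  case True
  have "(real d - (real m - 1)) ^ m = (\<Prod>i = 0..<m. real d - (real m - 1))" by simp
  also have "\<dots> \<le> (\<Prod>i = 0..<m. real d - of_nat i)"
    by (rule prod_mono) (use True in auto)
  also have "\<dots> = real (d choose m) * fact m"
    using gbinomial_mult_fact'[of "real d" m] by (simp add: binomial_gbinomial)
  finally show ?thesis using True by auto
qed

lemma power_le_fact_mul_sum_binomial:
  fixes d :: "'b \<Rightarrow> nat" and \<mu> :: real
  assumes "finite V" "V \<noteq> {}" "1 \<le> m" "real m - 1 \<le> \<mu>"
    and "\<mu> * card V \<le> (\<Sum>w\<in>V. real (d w))"
  shows "card V * (\<mu> - (real m - 1)) ^ m \<le> fact m * (\<Sum>w\<in>V. real (d w choose m))"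
proof -
  define y where "y w = max (real (d w) - (real m - 1)) 0" for w
  have "(\<mu> - (real m - 1)) * card V \<le> (\<Sum>w\<in>V. real (d w) - (real m - 1))"
    using assms(5) by (simp add: sum_subtractf right_diff_distrib mult.commute)
  also have "\<dots> \<le> (\<Sum>w\<in>V. y w)"
    unfolding y_def by (intro sum_mono) auto
  finally have "\<mu> - (real m - 1) \<le> (\<Sum>w\<in>V. y w) / card V"
    using assms(1,2) by (simp add: pos_le_divide_eq card_gt_0_iff)
  then have "card V * (\<mu> - (real m - 1)) ^ m \<le> card V * ((\<Sum>w\<in>V. y w) / card V) ^ m"
    using assms(4) by (intro mult_left_mono power_mono) auto
  also have "\<dots> \<le> (\<Sum>w\<in>V. y w ^ m)"
    using power_mean_le_sum_power[OF assms(1,2)] unfolding y_def by simp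
  also have "\<dots> \<le> (\<Sum>w\<in>V. real (d w choose m) * fact m)"
    unfolding y_def using power_le_binomial_fact[OF assms(3)] by (intro sum_mono) auto
  finally show ?thesis by (simp add: sum_distrib_left mult.commute)
qed

lemma sum_card_common_neighbourhood:
  assumes "finite A" "finite V"
  shows "(\<Sum>J | J \<subseteq> A \<and> card J = m. card {w\<in>V. \<forall>x\<in>J. w \<in> N x})
           = (\<Sum>w\<in>V. card {x\<in>A. w \<in> N x} choose m)"
proof -
  have fin: "finite {J. J \<subseteq> A \<and> card J = m}" using assms(1) by (auto intro: finite_subset[of _ "Pow A"])
  have "{J. (J \<subseteq> A \<and> card J = m) \<and> (\<forall>x\<in>J. w \<in> N x)} = {J. J \<subseteq> {x\<in>A. w \<in> N x} \<and> card J = m}" for w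
    by auto
  then show ?thesis
    unfolding sum_card_filter_swap[OF fin assms(2)] using assms(1) by (simp add: n_subsets)
qed

lemma sum_card_neighbourhood:
  assumes "finite A" "finite V" "\<And>x. x \<in> A \<Longrightarrow> N x \<subseteq> V"
  shows "(\<Sum>x\<in>A. card (N x)) = (\<Sum>w\<in>V. card {x\<in>A. w \<in> N x})"
proof -
  have "(\<Sum>x\<in>A. card (N x)) = (\<Sum>x\<in>A. card {w\<in>V. w \<in> N x})"
    using assms(3) by (intro sum.cong) (auto intro!: arg_cong[where f = card])
  also have "\<dots> = (\<Sum>w\<in>V. card {x\<in>A. w \<in> N x})" by (rule sum_card_filter_swap[OF assms(1,2)])
  finally show ?thesis .
qed

lemma exists_subset_large_common_neighbourhood:
  fixes A :: "'b set" and V :: "'a set" and N :: "'b \<Rightarrow> 'a set" and e :: real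
  assumes fA: "finite A" and fV: "finite V" and NV: "\<And>x. x \<in> A \<Longrightarrow> N x \<subseteq> V"
    and deg: "\<And>x. x \<in> A \<Longrightarrow> e * card V \<le> card (N x)"
    and m: "1 \<le> m" "m \<le> card A" "real m - 1 \<le> e * card A"
  shows "\<exists>J\<subseteq>A. card J = m \<and>
           card V * (e - (real m - 1) / card A) ^ m \<le> card {w\<in>V. \<forall>x\<in>J. w \<in> N x}"
proof (cases "V = {}")
  case True
  then show ?thesis using obtain_subset_with_card_n[OF m(2)] by auto
next
  case False
  define JJ where "JJ = {J. J \<subseteq> A \<and> card J = m}"
  define T where "T J = card {w\<in>V. \<forall>x\<in>J. w \<in> N x}" for J
  have fJJ: "finite JJ" unfolding JJ_def using fA by (auto intro: finite_subset[of _ "Pow A"])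
  have cJJ: "card JJ = card A choose m" unfolding JJ_def using n_subsets[OF fA] by simp
  have "JJ \<noteq> {}" unfolding JJ_def using obtain_subset_with_card_n[OF m(2)] by blast
  then have "Max (T ` JJ) \<in> T ` JJ" using fJJ by (intro Max_in) auto
  then obtain J where J: "J \<in> JJ" and JMax: "T J = Max (T ` JJ)" by (metis imageE)
  have choose_average: "fact m * (\<Sum>J\<in>JJ. T J) \<le> card A ^ m * T J"
  proof -
    have "fact m * (\<Sum>J\<in>JJ. T J) \<le> fact m * (card JJ * T J)"
      using sum_le_card_Max[OF fJJ, of T] JMax by simp
    also have "\<dots> = (card A choose m) * fact m * T J" using cJJ by (simp add: mult_ac)
    also have "\<dots> \<le> card A ^ m * T J" by (rule mult_le_mono1[OF binomial_fact_pow])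
    finally show ?thesis .
  qed
  have "(\<Sum>x\<in>A. e * card V) \<le> (\<Sum>x\<in>A. real (card (N x)))"
    by (rule sum_mono) (rule deg)
  then have "e * card A * card V \<le> (\<Sum>w\<in>V. real (card {x\<in>A. w \<in> N x}))"
    using sum_card_neighbourhood[OF fA fV NV] by (simp add: mult_ac flip: of_nat_sum)
  then have "card V * (e * card A - (real m - 1)) ^ m
      \<le> fact m * (\<Sum>w\<in>V. real (card {x\<in>A. w \<in> N x} choose m))"
    by (rule power_le_fact_mul_sum_binomial[OF fV False m(1,3)])
  also have "\<dots> = real (fact m * (\<Sum>J\<in>JJ. T J))"
    using arg_cong[OF sum_card_common_neighbourhood[OF fA fV, where m = m and N = N], of real]
    unfolding JJ_def T_def by simp
  also have "\<dots> \<le> real (card A ^ m * T J)"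
    using choose_average by (simp only: of_nat_le_iff)
  finally have "card V * (e * card A - (real m - 1)) ^ m \<le> card A ^ m * T J" .
  moreover have "(e * card A - (real m - 1)) ^ m = card A ^ m * (e - (real m - 1) / card A) ^ m"
  proof -
    have "e * card A - (real m - 1) = card A * (e - (real m - 1) / card A)"
      using m by (simp add: field_simps)
    then show ?thesis by (simp add: power_mult_distrib)
  qed
  ultimately have "card A ^ m * (card V * (e - (real m - 1) / card A) ^ m) \<le> card A ^ m * T J"
    by (simp add: mult_ac)
  then have "card V * (e - (real m - 1) / card A) ^ m \<le> T J"
    using m by (simp add: mult_le_cancel_left_pos)
  then show ?thesis using J unfolding JJ_def T_def by blast
qed

section \<open>Rich prefixes\<close>

function rich_prefixes :: "nat \<Rightarrow> 'a set \<Rightarrow> real \<Rightarrow> (nat \<Rightarrow> 'a) set \<Rightarrow> nat \<Rightarrow> (nat \<Rightarrow> 'a) set" where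
  "rich_prefixes r V \<theta> M k =
     (if r \<le> k then M
      else {q \<in> {0..<k} \<rightarrow>\<^sub>E V. \<theta> \<le> card {w\<in>V. q(k := w) \<in> rich_prefixes r V \<theta> M (Suc k)}})"
  by auto
termination by (relation "Wellfounded.measure (\<lambda>(r, V, \<theta>, M, k). r - k)") auto

declare rich_prefixes.simps [simp del]

lemma rich_prefixes_top [simp]: "rich_prefixes r V \<theta> M r = M"
  by (simp add: rich_prefixes.simps)

lemma mem_rich_prefixes_iff:
  "k < r \<Longrightarrow> q \<in> rich_prefixes r V \<theta> M k \<longleftrightarrow>
     q \<in> {0..<k} \<rightarrow>\<^sub>E V \<and> \<theta> \<le> card {w\<in>V. q(k := w) \<in> rich_prefixes r V \<theta> M (Suc k)}"
  by (subst rich_prefixes.simps) simp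

lemma rich_prefixes_subset_PiE:
  assumes "M \<subseteq> {0..<r} \<rightarrow>\<^sub>E V" "k \<le> r"
  shows "rich_prefixes r V \<theta> M k \<subseteq> {0..<k} \<rightarrow>\<^sub>E V"
proof (cases "k = r")
  case False
  then have "k < r" using assms(2) by simp
  then show ?thesis using mem_rich_prefixes_iff[of k r _ V \<theta> M] by blast
qed (use assms in simp)

lemma rich_prefix_extends_to_copy:
  assumes "0 < \<theta>" "k \<le> r" "q \<in> rich_prefixes r V \<theta> M k"
  shows "\<exists>h\<in>M. \<forall>i<k. h i = q i"
  using assms(2,3)
proof (induction "r - k" arbitrary: k q)
  case 0
  then show ?case by auto
next
  case (Suc j)
  let ?R = "rich_prefixes r V \<theta> M"
  have kr: "k < r" using Suc.hyps(2) by simp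
  have "\<theta> \<le> card {w\<in>V. q(k := w) \<in> ?R (Suc k)}"
    using Suc.prems(2) mem_rich_prefixes_iff[OF kr] by blast
  then have "{w\<in>V. q(k := w) \<in> ?R (Suc k)} \<noteq> {}" using assms(1) by (metis card.empty of_nat_0 not_le)
  then obtain w where "q(k := w) \<in> ?R (Suc k)" by blast
  moreover have "j = r - Suc k" using Suc.hyps(2) by simp
  ultimately obtain h where "h \<in> M" "\<forall>i<Suc k. h i = (q(k := w)) i"
    using Suc.hyps(1) kr by (metis Suc_leI)
  then show ?case by (intro bexI[of _ h]) auto
qed

lemma card_rich_prefixes_Suc_le:
  fixes \<theta> :: real
  assumes fV: "finite V" and M: "M \<subseteq> {0..<r} \<rightarrow>\<^sub>E V" and kr: "k < r" and \<theta>: "0 \<le> \<theta>"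
  shows "card (rich_prefixes r V \<theta> M (Suc k))
           \<le> card (rich_prefixes r V \<theta> M k) * card V + \<theta> * card V ^ k"
proof -
  let ?P = "rich_prefixes r V \<theta> M (Suc k)" and ?Q = "rich_prefixes r V \<theta> M k"
    and ?I = "{0..<k} \<rightarrow>\<^sub>E V"
  define ext where "ext q = {w\<in>V. q(k := w) \<in> ?P}" for q
  have fI: "finite ?I" using fV by (simp add: finite_PiE)
  have QI: "?Q \<subseteq> ?I" using rich_prefixes_subset_PiE[OF M] kr by simp
  have fext: "finite (ext q)" for q unfolding ext_def using fV by simp
  have "?P \<subseteq> (\<lambda>(q, w). q(k := w)) ` Sigma ?I ext"
  proof
    fix h assume hP: "h \<in> ?P"
    then have h: "h \<in> {0..<Suc k} \<rightarrow>\<^sub>E V"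
      using rich_prefixes_subset_PiE[OF M, of "Suc k"] kr by auto
    then have eq: "h = (\<lambda>(q, w). q(k := w)) (restrict h {0..<k}, h k)"
      by (simp add: atLeast0_lessThan_Suc)
    have "(restrict h {0..<k}, h k) \<in> Sigma ?I ext"
      using h hP eq unfolding ext_def by auto
    with eq show "h \<in> (\<lambda>(q, w). q(k := w)) ` Sigma ?I ext" by (rule image_eqI)
  qed
  then have "card ?P \<le> card ((\<lambda>(q, w). q(k := w)) ` Sigma ?I ext)"
    using fI fext by (intro card_mono) auto
  also have "\<dots> \<le> card (Sigma ?I ext)" by (rule card_image_le) (use fI fext in auto)
  also have "\<dots> = (\<Sum>q\<in>?I. card (ext q))" using fI fext by simp
  finally have "card ?P \<le> (\<Sum>q\<in>?I. real (card (ext q)))" by (simp flip: of_nat_sum)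
  also have "\<dots> \<le> (\<Sum>q\<in>?I. if q \<in> ?Q then real (card V) else \<theta>)"
  proof (rule sum_mono)
    fix q assume "q \<in> ?I"
    then show "card (ext q) \<le> (if q \<in> ?Q then real (card V) else \<theta>)"
      using mem_rich_prefixes_iff[OF kr, of q] fV unfolding ext_def by (auto intro: card_mono)
  qed
  also have "\<dots> = card (?I \<inter> ?Q) * card V + card (?I - ?Q) * \<theta>"
    using fI by (simp add: sum.If_cases Diff_eq)
  also have "\<dots> \<le> card ?Q * card V + card ?I * \<theta>"
    using fI \<theta> QI by (intro add_mono mult_right_mono) (auto intro: card_mono simp: Int_absorb1)
  finally show ?thesis using fV by (simp add: card_PiE mult.commute)
qed

lemma card_rich_prefixes_ge:
  fixes c \<epsilon> :: real
  assumes fV: "finite V" and V: "V \<noteq> {}" and M: "M \<subseteq> {0..<r} \<rightarrow>\<^sub>E V" and \<epsilon>: "0 \<le> \<epsilon>"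
    and cM: "c * card V ^ r \<le> card M" and "k \<le> r"
  shows "(c - real (r - k) * \<epsilon>) * card V ^ k \<le> card (rich_prefixes r V (\<epsilon> * card V) M k)"
  using \<open>k \<le> r\<close>
proof (induction "r - k" arbitrary: k)
  case 0
  then show ?case using cM by simp
next
  case (Suc j)
  let ?n = "real (card V)" and ?R = "rich_prefixes r V (\<epsilon> * card V) M"
  have kr: "k < r" using Suc by simp
  have "(c - real (r - k) * \<epsilon>) * ?n ^ k * ?n = (c - real (r - Suc k) * \<epsilon>) * ?n ^ Suc k - \<epsilon> * ?n * ?n ^ k"
    using kr by (simp add: of_nat_diff algebra_simps)
  also have "\<dots> \<le> card (?R (Suc k)) - \<epsilon> * ?n * ?n ^ k"
    using Suc.hyps(1)[of "Suc k"] Suc.hyps(2) kr by simp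
  also have "\<dots> \<le> card (?R k) * ?n"
    using card_rich_prefixes_Suc_le[OF fV M kr, of "\<epsilon> * card V"] \<epsilon> by simp
  finally show ?case using fV V kr by (simp add: card_gt_0_iff)
qed

section \<open>Coherent families of prefixes\<close>

lemma image_fun_upd_atLeastLessThan_Suc:
  "(f(k := v)) ` {0..<Suc k} = insert v (f ` {0..<k})"
  by (auto simp: fun_upd_image atLeast0_lessThan_Suc)

lemma fun_upd_inj_on_not_in_image:
  "inj_on (f(k := v)) {0..<Suc k} \<Longrightarrow> v \<notin> f ` {0..<k}"
  by (auto simp: inj_on_def atLeast0_lessThan_Suc)

lemma inj_on_fun_upd_PiE:
  fixes k :: nat and w :: "(nat \<Rightarrow> 'a) \<Rightarrow> 'a"
  assumes "J \<subseteq> {0..<k} \<rightarrow>\<^sub>E V"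
  shows "inj_on (\<lambda>f. f(k := w f)) J"
proof
  fix f g assume fg: "f \<in> J" "g \<in> J" "f(k := w f) = g(k := w g)"
  have "f \<in> {0..<k} \<rightarrow>\<^sub>E V" "g \<in> {0..<k} \<rightarrow>\<^sub>E V" using assms fg(1,2) by auto
  then have "f k = undefined" "g k = undefined"
    using PiE_arb[of f "{0..<k}" "\<lambda>_. V" k] PiE_arb[of g "{0..<k}" "\<lambda>_. V" k] by auto
  moreover have "f(k := undefined) = g(k := undefined)" using fg(3) by (metis fun_upd_upd)
  ultimately show "f = g" by (metis fun_upd_triv)
qed

lemma induced_copies_subset_PiE: "induced_copies r EH V E \<subseteq> {0..<r} \<rightarrow>\<^sub>E V"
  unfolding induced_copies_def by auto

lemma inj_on_induced_copy: "h \<in> induced_copies r EH V E \<Longrightarrow> inj_on h {0..<r}"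
  unfolding induced_copies_def by auto

text \<open>x in class i and y in class j meet the requirements of induced_of_type and of
  clause (a) of covers.\<close>
definition good_pair ::
  "nat \<Rightarrow> (nat \<Rightarrow> nat \<Rightarrow> bool) \<Rightarrow> ('a \<Rightarrow> 'a \<Rightarrow> bool) \<Rightarrow> (nat \<Rightarrow> 'a) set \<Rightarrow> nat \<Rightarrow> 'a \<Rightarrow> nat \<Rightarrow> 'a \<Rightarrow> bool"
  where "good_pair r EH E M i x j y \<longleftrightarrow>
    (E x y \<longleftrightarrow> EH i j) \<and> (E x y \<longrightarrow> (\<exists>h\<in>M. \<exists>u<r. \<exists>v<r. EH u v \<and> {h u, h v} = {x, y}))"

definition coherent ::
  "nat \<Rightarrow> (nat \<Rightarrow> nat \<Rightarrow> bool) \<Rightarrow> ('a \<Rightarrow> 'a \<Rightarrow> bool) \<Rightarrow> (nat \<Rightarrow> 'a) set \<Rightarrow> nat \<Rightarrow> (nat \<Rightarrow> 'a) set \<Rightarrow> bool"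
  where "coherent r EH E M k F \<longleftrightarrow>
    (\<forall>f\<in>F. \<forall>g\<in>F. f \<noteq> g \<longrightarrow> f ` {0..<k} \<inter> g ` {0..<k} = {} \<and>
       (\<forall>i<k. \<forall>j<k. i \<noteq> j \<longrightarrow> good_pair r EH E M i (f i) j (g j)))"

lemma coherent_disjoint:
  "coherent r EH E M k F \<Longrightarrow> f \<in> F \<Longrightarrow> g \<in> F \<Longrightarrow> f \<noteq> g \<Longrightarrow> f ` {0..<k} \<inter> g ` {0..<k} = {}"
  unfolding coherent_def by blast

lemma coherent_good_pair:
  "coherent r EH E M k F \<Longrightarrow> f \<in> F \<Longrightarrow> g \<in> F \<Longrightarrow> f \<noteq> g \<Longrightarrow> i < k \<Longrightarrow> j < k \<Longrightarrow> i \<noteq> j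
    \<Longrightarrow> good_pair r EH E M i (f i) j (g j)"
  unfolding coherent_def by blast

lemma coherent_subset: "coherent r EH E M k F \<Longrightarrow> J \<subseteq> F \<Longrightarrow> coherent r EH E M k J"
  unfolding coherent_def by blast

lemma coherent_one:
  assumes "F \<subseteq> {0..<1} \<rightarrow>\<^sub>E V"
  shows "coherent r EH E M 1 F"
proof -
  have "f 0 \<noteq> g 0" if "f \<in> F" "g \<in> F" "f \<noteq> g" for f g
  proof
    assume "f 0 = g 0"
    with that(1,2) assms have "f = g" by (intro PiE_ext[of f "{0..<1}" "\<lambda>_. V"]) auto
    with that(3) show False ..
  qed
  then show ?thesis unfolding coherent_def by auto
qed

lemma good_pair_copy:
  assumes "M \<subseteq> induced_copies r EH V E" "h \<in> M" "i < r" "j < r" "i \<noteq> j"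
  shows "good_pair r EH E M i (h i) j (h j)"
proof -
  have "E (h i) (h j) \<longleftrightarrow> EH i j" using assms unfolding induced_copies_def by auto
  then show ?thesis unfolding good_pair_def using assms by blast
qed

context
  fixes r :: nat and EH :: "nat \<Rightarrow> nat \<Rightarrow> bool" and V :: "'a set" and E :: "'a \<Rightarrow> 'a \<Rightarrow> bool"
    and M :: "(nat \<Rightarrow> 'a) set" and \<theta> :: real
  assumes M: "M \<subseteq> induced_copies r EH V E" and \<theta>: "0 < \<theta>"
begin

lemma good_pair_rich_prefix:
  assumes "k \<le> r" "q \<in> rich_prefixes r V \<theta> M k" "i < k" "j < k" "i \<noteq> j"
  shows "good_pair r EH E M i (q i) j (q j)"
proof -
  obtain h where h: "h \<in> M" "\<forall>i<k. h i = q i"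
    using rich_prefix_extends_to_copy[OF \<theta> assms(1,2)] by blast
  have "good_pair r EH E M i (h i) j (h j)"
    using good_pair_copy[OF M h(1)] assms(1,3-5) by simp
  then show ?thesis using h(2) assms(3,4) by simp
qed

lemma inj_on_rich_prefix:
  assumes "k \<le> r" "q \<in> rich_prefixes r V \<theta> M k"
  shows "inj_on q {0..<k}"
proof -
  obtain h where h: "h \<in> M" "\<forall>i<k. h i = q i"
    using rich_prefix_extends_to_copy[OF \<theta> assms] by blast
  have "inj_on h {0..<r}" using M h(1) inj_on_induced_copy by blast
  then have "inj_on h {0..<k}" by (rule inj_on_subset) (use assms(1) in auto)
  then show ?thesis using h(2) by (simp add: inj_on_def)
qed

lemma coherent_extension:
  assumes kr: "k < r" and J: "J \<subseteq> rich_prefixes r V \<theta> M k" "coherent r EH E M k J" "finite J"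
    and fV: "finite V"
    and many: "card J \<le> card {w\<in>V. \<forall>f\<in>J. f(k := w) \<in> rich_prefixes r V \<theta> M (Suc k)}"
  shows "\<exists>F\<subseteq>rich_prefixes r V \<theta> M (Suc k). coherent r EH E M (Suc k) F \<and> card F = card J \<and> finite F"
proof -
  let ?R = "rich_prefixes r V \<theta> M (Suc k)"
  define T where "T = {w\<in>V. \<forall>f\<in>J. f(k := w) \<in> ?R}"
  have "finite T" unfolding T_def using fV by simp
  then obtain w where w: "w ` J \<subseteq> T" "inj_on w J"
    using card_le_inj[OF \<open>finite J\<close>] many[folded T_def] by blast
  have ext: "f(k := v) \<in> ?R" if "f \<in> J" "v \<in> T" for f v using that T_def by auto
  have "rich_prefixes r V \<theta> M k \<subseteq> {0..<k} \<rightarrow>\<^sub>E V"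
    by (rule rich_prefixes_subset_PiE) (use subset_trans[OF M induced_copies_subset_PiE] kr in auto)
  with J(1) have JE: "J \<subseteq> {0..<k} \<rightarrow>\<^sub>E V" by (rule order_trans)
  have good_new_left: "good_pair r EH E M i (f i) k v" if "f \<in> J" "v \<in> T" "i < k" for f v i
    using good_pair_rich_prefix[OF _ ext[OF that(1,2)], of i k] kr that(3) by simp
  have good_new_right: "good_pair r EH E M k v j (f j)" if "f \<in> J" "v \<in> T" "j < k" for f v j
    using good_pair_rich_prefix[OF _ ext[OF that(1,2)], of k j] kr that(3) by simp
  have fresh: "v \<notin> f ` {0..<k}" if "f \<in> J" "v \<in> T" for f v
    using fun_upd_inj_on_not_in_image inj_on_rich_prefix[OF _ ext[OF that]] kr by simp
  define F where "F = (\<lambda>f. f(k := w f)) ` J"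
  have "inj_on (\<lambda>f. f(k := w f)) J" using JE by (rule inj_on_fun_upd_PiE)
  then have "card F = card J" unfolding F_def by (rule card_image)
  moreover have "F \<subseteq> ?R" unfolding F_def using ext w(1) by auto
  moreover have "coherent r EH E M (Suc k) F"
    unfolding coherent_def
  proof (intro ballI impI conjI allI)
    fix f' g' assume "f' \<in> F" "g' \<in> F" "f' \<noteq> g'"
    then obtain f g where fg: "f \<in> J" "g \<in> J" "f \<noteq> g" "f' = f(k := w f)" "g' = g(k := w g)"
      unfolding F_def by auto
    have wfg: "w f \<in> T" "w g \<in> T" "w f \<noteq> w g" using w fg(1-3) by (auto simp: inj_on_def)
    have "f ` {0..<k} \<inter> g ` {0..<k} = {}" using coherent_disjoint[OF J(2) fg(1-3)] .
    then show "f' ` {0..<Suc k} \<inter> g' ` {0..<Suc k} = {}"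
      unfolding fg(4,5) image_fun_upd_atLeastLessThan_Suc
      using wfg fresh[OF fg(1) wfg(2)] fresh[OF fg(2) wfg(1)] by auto
    fix i j assume "i < Suc k" "j < Suc k" "i \<noteq> j"
    then consider "i < k" "j < k" | "i < k" "j = k" | "i = k" "j < k" by linarith
    then show "good_pair r EH E M i (f' i) j (g' j)"
    proof cases
      case 1
      then show ?thesis using coherent_good_pair[OF J(2) fg(1-3) _ _ \<open>i \<noteq> j\<close>] fg(4,5) by simp
    next
      case 2
      then show ?thesis using good_new_left[OF fg(1) wfg(2)] fg by simp
    next
      case 3
      then show ?thesis using good_new_right[OF fg(2) wfg(1)] fg by simp
    qed
  qed
  ultimately show ?thesis using \<open>finite J\<close> unfolding F_def by blast
qed

end

lemma exists_subfamily_many_common_extensions: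
  fixes B :: nat
  assumes M: "M \<subseteq> {0..<r} \<rightarrow>\<^sub>E V" and fV: "finite V" and kr: "k < r" and B: "1 \<le> B"
    and F: "F \<subseteq> rich_prefixes r V (2 / B * card V) M k" and m: "1 \<le> m" "m * B \<le> card F"
  shows "\<exists>J\<subseteq>F. card J = m \<and> card V / B ^ m
           \<le> card {w\<in>V. \<forall>f\<in>J. f(k := w) \<in> rich_prefixes r V (2 / B * card V) M (Suc k)}"
proof -
  let ?R = "rich_prefixes r V (2 / B * card V) M"
  define N where "N f = {w\<in>V. f(k := w) \<in> ?R (Suc k)}" for f
  have "F \<subseteq> {0..<k} \<rightarrow>\<^sub>E V" using order_trans[OF F rich_prefixes_subset_PiE[OF M]] kr by simp
  then have fF: "finite F" by (rule finite_subset) (use fV in \<open>simp add: finite_PiE\<close>)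
  have NV: "N f \<subseteq> V" if "f \<in> F" for f unfolding N_def by auto
  have deg: "2 / B * card V \<le> card (N f)" if "f \<in> F" for f
  proof -
    have "f \<in> ?R k" using F that by blast
    then show ?thesis by (simp add: mem_rich_prefixes_iff[OF kr] N_def)
  qed
  have mF: "real m * B \<le> card F" using m(2) by (simp flip: of_nat_mult)
  have "m \<le> m * B" using B by simp
  then have mF': "m \<le> card F" using m(2) by linarith
  have me: "real m - 1 \<le> 2 / B * card F"
  proof -
    have "real m \<le> 2 / B * (real m * B)" using B by simp
    also have "\<dots> \<le> 2 / B * card F" using mF by (intro mult_left_mono) auto
    finally show ?thesis by simp
  qed
  obtain J where J: "J \<subseteq> F" "card J = m"
    "card V * (2 / B - (real m - 1) / card F) ^ m \<le> card {w\<in>V. \<forall>f\<in>J. w \<in> N f}"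
    using exists_subset_large_common_neighbourhood[where N = N, OF fF fV NV deg m(1) mF' me] by blast
  have "(real m - 1) / card F \<le> real m / (real m * B)"
    using mF m(1) B by (intro frac_le) auto
  also have "\<dots> = 1 / B" using m(1) by simp
  finally have "1 / B \<le> 2 / B - (real m - 1) / card F" by (simp add: diff_divide_distrib)
  then have "card V * (1 / B) ^ m \<le> card V * (2 / B - (real m - 1) / card F) ^ m"
    by (intro mult_left_mono power_mono) auto
  also note J(3)
  also have "{w\<in>V. \<forall>f\<in>J. w \<in> N f} = {w\<in>V. \<forall>f\<in>J. f(k := w) \<in> ?R (Suc k)}"
    unfolding N_def by auto
  finally show ?thesis using J(1,2) by (auto simp: power_one_over)
qed

lemma exists_large_coherent_family:
  fixes B s :: nat
  assumes M: "M \<subseteq> induced_copies r EH V E" and fV: "finite V" "V \<noteq> {}" and B: "1 \<le> B"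
    and s: "1 \<le> s"
    and first: "s * B ^ (r - 1) \<le> card (rich_prefixes r V (2 / B * card V) M 1)"
    and grow: "\<And>k. 2 \<le> k \<Longrightarrow> k < r \<Longrightarrow> s * B ^ (r - k) \<le> card V / B ^ (s * B ^ (r - k))"
    and k: "1 \<le> k" "k < r"
  shows "\<exists>F\<subseteq>rich_prefixes r V (2 / B * card V) M k.
           coherent r EH E M k F \<and> s * B ^ (r - k) \<le> card F \<and> finite F"
proof -
  let ?R = "rich_prefixes r V (2 / B * card V) M"
  have MP: "M \<subseteq> {0..<r} \<rightarrow>\<^sub>E V" using M induced_copies_subset_PiE by blast
  show ?thesis
    using k
  proof (induction k rule: dec_induct)
    case base
    have R1: "?R 1 \<subseteq> {0..<1} \<rightarrow>\<^sub>E V" using rich_prefixes_subset_PiE[OF MP, of 1] base by simp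
    have "finite (?R 1)" by (rule finite_subset[OF R1]) (use fV in \<open>simp add: finite_PiE\<close>)
    then show ?case using coherent_one[OF R1] first by (intro exI[of _ "?R 1"] conjI) auto
  next
    case (step k)
    then have kr: "k < r" by simp
    from step.IH[OF kr] obtain F
      where F: "F \<subseteq> ?R k" "coherent r EH E M k F" "s * B ^ (r - k) \<le> card F" "finite F"
      by auto
    define m where "m = s * B ^ (r - Suc k)"
    have "r - k = Suc (r - Suc k)" using step.prems by simp
    then have "m * B \<le> card F" using F(3) unfolding m_def by (simp add: mult_ac)
    moreover have "1 \<le> m" unfolding m_def using s B by simp
    ultimately obtain J where J: "J \<subseteq> F" "card J = m"
      "card V / B ^ m \<le> card {w\<in>V. \<forall>f\<in>J. f(k := w) \<in> ?R (Suc k)}"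
      using exists_subfamily_many_common_extensions[OF MP fV(1) kr B F(1)] by blast
    have "m \<le> card V / B ^ m" using grow[of "Suc k"] step unfolding m_def by simp
    with J(2,3) have many: "card J \<le> card {w\<in>V. \<forall>f\<in>J. f(k := w) \<in> ?R (Suc k)}" by linarith
    have "0 < 2 / B * card V" using B fV by (simp add: card_gt_0_iff)
    from coherent_extension[OF M this kr order_trans[OF J(1) F(1)] coherent_subset[OF F(2) J(1)]
        finite_subset[OF J(1) F(4)] fV(1) many]
    obtain F' where "F' \<subseteq> ?R (Suc k)" "coherent r EH E M (Suc k) F'" "card F' = m" "finite F'"
      unfolding J(2) by auto
    then show ?case unfolding m_def by (intro exI[of _ F'] conjI) auto
  qed
qed

section \<open>The classes of a coherent family\<close>

definition family_classes :: "nat \<Rightarrow> (nat \<Rightarrow> 'a) set \<Rightarrow> 'a set \<Rightarrow> nat \<Rightarrow> 'a set" where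
  "family_classes k J T i = (if i = k then T else (\<lambda>f. f i) ` J)"

context
  fixes r k s :: nat and EH :: "nat \<Rightarrow> nat \<Rightarrow> bool" and V :: "'a set" and E :: "'a \<Rightarrow> 'a \<Rightarrow> bool"
    and M :: "(nat \<Rightarrow> 'a) set" and J :: "(nat \<Rightarrow> 'a) set" and T :: "'a set"
  assumes M: "M \<subseteq> induced_copies r EH V E" and r: "r = Suc k"
    and J: "J \<subseteq> {0..<k} \<rightarrow>\<^sub>E V" "coherent r EH E M k J" "card J = s"
    and T: "T = {w\<in>V. \<forall>f\<in>J. f(k := w) \<in> M}" and s: "1 \<le> s" "s \<le> card T"
begin

private abbreviation "X \<equiv> family_classes k J T"

lemma common_extension_in_copies: "f \<in> J \<Longrightarrow> w \<in> T \<Longrightarrow> f(k := w) \<in> M"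
  using T by blast

lemma common_extensions_nonempty: "T \<noteq> {}"
  using s by auto

lemma inj_on_common_extension:
  assumes "f \<in> J" "w \<in> T"
  shows "inj_on (f(k := w)) {0..<Suc k}"
  using inj_on_induced_copy[OF subsetD[OF M common_extension_in_copies[OF assms]]] r by simp

lemma common_extension_fresh: "f \<in> J \<Longrightarrow> w \<in> T \<Longrightarrow> w \<notin> f ` {0..<k}"
  by (rule fun_upd_inj_on_not_in_image[OF inj_on_common_extension])

lemma inj_on_family_member:
  assumes "f \<in> J"
  shows "inj_on f {0..<k}"
proof -
  obtain w where "w \<in> T" using common_extensions_nonempty by blast
  then have "inj_on (f(k := w)) {0..<k}"
    by (rule inj_on_subset[OF inj_on_common_extension[OF assms]]) auto
  then show ?thesis by (simp add: inj_on_def)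
qed

lemma good_pair_family_member:
  assumes "f \<in> J" "i < k" "j < k" "i \<noteq> j"
  shows "good_pair r EH E M i (f i) j (f j)"
proof -
  obtain w where "w \<in> T" using common_extensions_nonempty by blast
  then have "good_pair r EH E M i ((f(k := w)) i) j ((f(k := w)) j)"
    using good_pair_copy[OF M common_extension_in_copies[OF assms(1)], of w i j] assms(2-4) r by simp
  then show ?thesis using assms(2,3) by simp
qed

lemma good_pair_family_classes:
  assumes "i < r" "j < r" "i \<noteq> j" "x \<in> X i" "y \<in> X j"
  shows "good_pair r EH E M i x j y"
proof -
  consider "i = k" "j < k" | "i < k" "j = k" | "i < k" "j < k" using assms(1-3) r by linarith
  then show ?thesis
  proof cases
    case 1
    then obtain g where "g \<in> J" "y = g j" "x \<in> T" using assms(4,5) by (auto simp: family_classes_def)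
    then show ?thesis
      using good_pair_copy[OF M common_extension_in_copies, of g x k j] 1 r by simp
  next
    case 2
    then obtain f where "f \<in> J" "x = f i" "y \<in> T" using assms(4,5) by (auto simp: family_classes_def)
    then show ?thesis
      using good_pair_copy[OF M common_extension_in_copies, of f y i k] 2 r by simp
  next
    case 3
    then obtain f g where fg: "f \<in> J" "g \<in> J" "x = f i" "y = g j"
      using assms(4,5) by (auto simp: family_classes_def)
    show ?thesis
    proof (cases "f = g")
      case True
      then show ?thesis using good_pair_family_member[of f i j] fg 3 assms(3) by simp
    next
      case False
      then show ?thesis using coherent_good_pair[OF J(2) fg(1,2) False 3 assms(3)] fg(3,4) by simp
    qed
  qed
qed

lemma family_classes_disjoint:
  assumes "i < r" "j < r" "i \<noteq> j"
  shows "X i \<inter> X j = {}"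
proof -
  have fresh: "X k \<inter> X l = {}" if "l < k" for l
    using common_extension_fresh that by (fastforce simp: family_classes_def)
  consider "i = k" "j < k" | "i < k" "j = k" | "i < k" "j < k" using assms r by linarith
  then show ?thesis
  proof cases
    case 3
    have "f i \<noteq> g j" if "f \<in> J" "g \<in> J" for f g
    proof (cases "f = g")
      case True
      then show ?thesis
        using inj_on_contraD[OF inj_on_family_member[OF that(1)] assms(3)] 3 by simp
    next
      case False
      then have "f ` {0..<k} \<inter> g ` {0..<k} = {}" using coherent_disjoint[OF J(2) that] by simp
      moreover have "f i \<in> f ` {0..<k}" "g j \<in> g ` {0..<k}" using 3 by auto
      ultimately show ?thesis by (metis disjoint_iff)
    qed
    then show ?thesis using 3 by (auto simp: family_classes_def)
  qed (use fresh in auto)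
qed

lemma family_classes_card:
  assumes "i < r"
  shows "X i \<subseteq> V \<and> finite (X i) \<and> card (X i) = (if i = r - 1 then card T else s)"
proof (cases "i = k")
  case True
  have "finite T" using s by (metis card.infinite not_one_le_zero order_trans)
  then show ?thesis using True T r by (auto simp: family_classes_def)
next
  case False
  then have ik: "i < k" using assms r by simp
  have "inj_on (\<lambda>f. f i) J"
  proof
    fix f g assume "f \<in> J" "g \<in> J" "f i = g i"
    show "f = g"
    proof (rule ccontr)
      assume "f \<noteq> g"
      then have "f ` {0..<k} \<inter> g ` {0..<k} = {}"
        using coherent_disjoint[OF J(2) \<open>f \<in> J\<close> \<open>g \<in> J\<close>] by simp
      moreover have "f i \<in> f ` {0..<k}" "g i \<in> g ` {0..<k}" using ik by auto
      ultimately show False using \<open>f i = g i\<close> by (simp add: disjoint_iff)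
    qed
  qed
  moreover have "finite J" using J(3) s(1) card.infinite by fastforce
  ultimately show ?thesis
    using False ik r J(1,3) by (auto simp: family_classes_def card_image PiE_iff)
qed

lemma induced_of_type_family_classes:
  "induced_of_type r EH V E (\<lambda>i. if i = r - 1 then card T else s) X"
  unfolding induced_of_type_def
proof (intro conjI allI impI ballI)
  fix i assume "i < r"
  then show "X i \<subseteq> V" "finite (X i)" "card (X i) = (if i = r - 1 then card T else s)"
    using family_classes_card by simp_all
next
  fix i j assume "i < r" "j < r" "i \<noteq> j"
  then show "X i \<inter> X j = {}" by (rule family_classes_disjoint)
next
  fix i j x y assume "i < r" "j < r" "i \<noteq> j" "x \<in> X i" "y \<in> X j"
  then have "good_pair r EH E M i x j y" by (rule good_pair_family_classes)
  then show "E x y \<longleftrightarrow> EH i j" unfolding good_pair_def by simp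
qed

lemma disjoint_copies_meeting_family_classes:
  "\<exists>c :: nat \<Rightarrow> nat \<Rightarrow> 'a. (\<forall>l<s. c l \<in> M) \<and>
     (\<forall>l<s. \<forall>l'<s. l \<noteq> l' \<longrightarrow> c l ` {0..<r} \<inter> c l' ` {0..<r} = {}) \<and>
     (\<forall>l<s. \<forall>a<r. c l ` {0..<r} \<inter> X a \<noteq> {})"
proof -
  have "finite J" using J(3) s(1) card.infinite by fastforce
  from ex_bij_betw_nat_finite[OF this] obtain e where e: "bij_betw e {0..<s} J"
    unfolding J(3) by blast
  have "finite T" using s by (metis card.infinite not_one_le_zero order_trans)
  from card_le_inj[of "{0..<s}" T] this s(2) obtain w
    where w: "w ` {0..<s} \<subseteq> T" "inj_on w {0..<s}" by auto
  have eJ: "e l \<in> J" if "l < s" for l using e that by (auto simp: bij_betw_def)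
  have wT: "w l \<in> T" if "l < s" for l using w that by auto
  define c where "c l = (e l)(k := w l)" for l
  have img: "c l ` {0..<r} = insert (w l) (e l ` {0..<k})" for l
    unfolding c_def r by (rule image_fun_upd_atLeastLessThan_Suc)
  show ?thesis
  proof (intro exI[of _ c] conjI allI impI)
    fix l assume "l < s"
    then show "c l \<in> M" unfolding c_def by (intro common_extension_in_copies eJ wT)
  next
    fix l l' assume l: "l < s" "l' < s" "l \<noteq> l'"
    then have "e l \<noteq> e l'" "w l \<noteq> w l'"
      using bij_betw_imp_inj_on[OF e] w(2) by (simp_all add: inj_on_eq_iff)
    then have "e l ` {0..<k} \<inter> e l' ` {0..<k} = {}"
      using coherent_disjoint[OF J(2) eJ eJ] l(1,2) by simp
    moreover have "w l \<notin> e l' ` {0..<k}" "w l' \<notin> e l ` {0..<k}"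
      using common_extension_fresh eJ wT l(1,2) by simp_all
    ultimately show "c l ` {0..<r} \<inter> c l' ` {0..<r} = {}"
      unfolding img using \<open>w l \<noteq> w l'\<close> by auto
  next
    fix l a assume "l < s" "a < r"
    then have "(if a = k then w l else e l a) \<in> c l ` {0..<r} \<inter> X a"
      unfolding img using eJ wT r by (cases "a = k") (auto simp: family_classes_def)
    then show "c l ` {0..<r} \<inter> X a \<noteq> {}" by blast
  qed
qed

lemma covers_family_classes:
  assumes "0 < k"
  shows "covers r EH E M (\<lambda>i. if i = r - 1 then card T else s) X"
proof -
  let ?sz = "\<lambda>i. if i = r - 1 then card T else s"
  have "Min (?sz ` {0..<r}) = s"
  proof (rule Min_eqI)
    show "s \<in> ?sz ` {0..<r}" using assms r by (auto intro!: image_eqI[of _ _ 0])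
  qed (use s(2) in auto)
  moreover have "\<exists>h\<in>M. \<exists>u<r. \<exists>v<r. EH u v \<and> {h u, h v} = {x, y}"
    if "a < r" "b < r" "a \<noteq> b" "x \<in> X a" "y \<in> X b" "E x y" for a b x y
    using good_pair_family_classes[OF that(1-5)] that(6) unfolding good_pair_def by simp
  ultimately show ?thesis
    unfolding covers_def using disjoint_copies_meeting_family_classes by simp
qed

end

section \<open>Numerical estimates\<close>

lemma six_mul_le_two_power_add_two: "6 * r \<le> (2::nat) ^ (r + 2)"
proof (induction r)
  case 0 then show ?case by simp
next
  case (Suc r)
  show ?case
  proof (cases "r = 0")
    case True then show ?thesis by simp
  next
    case False
    have "(8::nat) \<le> 2 ^ (r + 2)" using power_increasing[of 3 "r+2" "2::nat"] False by simp
    then show ?thesis using Suc by simp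
  qed
qed

lemma two_mul_le_two_power: "2 * r \<le> (2::nat) ^ r"
proof (induction r)
  case 0 then show ?case by simp
next
  case (Suc r)
  then show ?case by (cases r) auto
qed

lemma six_mul_le_two_power: "r \<ge> 5 \<Longrightarrow> 6 * r \<le> (2::nat) ^ r"
proof (induction r rule: dec_induct)
  case base then show ?case by simp
next
  case (step r)
  have "6 * Suc r = 6 * r + 6" by simp
  also have "\<dots> \<le> 2 ^ r + 2 ^ r"
  proof -
    have "(32::nat) \<le> 2 ^ r" using power_increasing[of 5 r "2::nat"] step by simp
    then show ?thesis using step by simp
  qed
  finally show ?case by simp
qed

lemma two_mul_le_two_power_sq_diff: "r \<ge> 2 \<Longrightarrow> 2 * r \<le> (2::nat) ^ (r^2 - r)"
proof -
  assume r: "r \<ge> 2"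
  have "r * 2 \<le> r * r" using r by (intro mult_le_mono2)
  then have "r \<le> r * r - r" by linarith
  then have "r \<le> r^2 - r" by (simp add: power2_eq_square)
  then have "(2::nat) ^ r \<le> 2 ^ (r^2 - r)" by (rule power_increasing) simp
  then show ?thesis by (rule le_trans[OF two_mul_le_two_power])
qed

lemma six_mul_power_le_two_power: "r \<ge> 2 \<Longrightarrow> (6 * r) ^ (r - 1) \<le> (2::nat) ^ (2 * r^2 - r - 2)"
proof -
  assume r: "r \<ge> 2"
  have "(6 * r) ^ (r - 1) \<le> (2 ^ (r + 2)) ^ (r - 1)" by (rule power_mono[OF six_mul_le_two_power_add_two]) simp
  also have "\<dots> = 2 ^ ((r + 2) * (r - 1))" by (rule power_mult[symmetric])
  also have "\<dots> \<le> 2 ^ (2 * r^2 - r - 2)"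
  proof (rule power_increasing)
    define q where "q = r - 2"
    have q: "r = q + 2" using r q_def by simp
    show "(r + 2) * (r - 1) \<le> 2 * r^2 - r - 2" unfolding q by (simp add: power2_eq_square algebra_simps)
  qed simp
  finally show ?thesis .
qed

lemma six_mul_power_mul_Suc_le_two_power: "r \<ge> 3 \<Longrightarrow> (6 * r) ^ (r - 2) * (r + 1) \<le> (2::nat) ^ (r^2 - r + 1)"
proof -
  assume r: "r \<ge> 3"
  consider "r = 3" | "r = 4" | "r \<ge> 5" using r by linarith
  then show ?thesis
  proof cases
    case 1 then show ?thesis by simp
  next
    case 2 then show ?thesis by simp
  next
    case 3
    have "(6 * r) ^ (r - 2) * (r + 1) \<le> (2 ^ r) ^ (r - 2) * 2 ^ r"
    proof (rule mult_mono)
      show "(6 * r) ^ (r - 2) \<le> (2 ^ r) ^ (r - 2)" by (rule power_mono[OF six_mul_le_two_power[OF 3]]) simp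
      show "r + 1 \<le> 2 ^ r" using two_mul_le_two_power[of r] r by simp
    qed auto
    also have "\<dots> = 2 ^ (r * (r - 2) + r)" by (simp only: power_mult[symmetric] power_add)
    also have "\<dots> \<le> 2 ^ (r^2 - r + 1)"
    proof (rule power_increasing)
      define q where "q = r - 2"
      have q: "r = q + 2" using r q_def by simp
      show "r * (r - 2) + r \<le> r^2 - r + 1" unfolding q by (simp add: power2_eq_square algebra_simps)
    qed simp
    finally show ?thesis .
  qed
qed

lemma ln_six_mul_le: "r \<ge> 2 \<Longrightarrow> ln (6 * real r) \<le> 2 * real r"
proof -
  assume r: "r \<ge> 2"
  have "1 + 2 * real r + (2 * real r)\<^sup>2 / 2 \<le> exp (2 * real r)"
    by (rule exp_lower_Taylor_quadratic) simp
  moreover have "6 * real r \<le> 1 + 2 * real r + (2 * real r)\<^sup>2 / 2"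
  proof -
    have "real r * 2 \<le> real r * real r" using r by (intro mult_left_mono) auto
    then show ?thesis by (simp add: power2_eq_square)
  qed
  ultimately have "6 * real r \<le> exp (2 * real r)" by linarith
  then have "ln (6 * real r) \<le> ln (exp (2 * real r))" using r by (subst ln_le_cancel_iff) auto
  then show ?thesis by simp
qed

lemma power_sq_mul_less_power:
  fixes c :: real
  assumes r: "2 \<le> r" and c: "0 < c" "c \<le> 1/2"
  shows "c ^ (r^2) * (2 * real r + 1 / c) < c ^ (r - 1)"
proof -
  define q where "q = r - 2"
  have rq: "r = q + 2" using r unfolding q_def by simp
  have half: "c ^ k \<le> (1/2) ^ k" for k using c by (intro power_mono) auto
  have "2 * real r \<le> 2 ^ (r^2 - r)"
    using two_mul_le_two_power_sq_diff[OF r] by (metis of_nat_le_iff of_nat_mult of_nat_numeral of_nat_power)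
  then have "2 * real r * c ^ (r^2 - r + 1) \<le> 2 ^ (r^2 - r) * (1/2) ^ (r^2 - r + 1)"
    using c(1) by (intro mult_mono half) auto
  also have "\<dots> = 1/2" by (simp add: power_one_over field_simps)
  finally have t1: "2 * real r * c ^ (r^2 - r + 1) \<le> 1/2" .
  have "(1/2::real) ^ (r^2 - r) \<le> (1/2) ^ 2"
    unfolding rq by (intro power_decreasing) (auto simp: power2_eq_square)
  then have t2: "c ^ (r^2 - r) \<le> 1/4" using half[of "r^2 - r"] by (simp add: power2_eq_square)
  have "c ^ (r^2) = c ^ (r - 1) * c ^ (r^2 - r) * c"
    unfolding rq by (simp add: power_add[symmetric] power_Suc2[symmetric] power2_eq_square algebra_simps)
  then have "c ^ (r^2) * (2 * real r + 1 / c)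
      = c ^ (r - 1) * (2 * real r * c ^ (r^2 - r + 1) + c ^ (r^2 - r))"
    using c(1) by (simp add: algebra_simps)
  also have "\<dots> \<le> c ^ (r - 1) * (3/4)"
    using t1 t2 c(1) by (intro mult_left_mono) auto
  also have "\<dots> < c ^ (r - 1)" using c(1) by simp
  finally show ?thesis .
qed

lemma power_sq_mul_six_mul_div_power_le:
  fixes c :: real
  assumes r: "2 \<le> r" and c: "0 < c" "c \<le> 1/2"
  shows "c ^ (r^2) * (6 * real r / c) ^ (r - 1) * (2 / c) \<le> 2 ^ (r^2) / 2"
proof -
  define a where "a = r^2 - r"
  define q where "q = r - 2"
  have rq: "r = q + 2" using r unfolding q_def by simp
  have "c ^ (r^2) = c ^ a * c ^ (r - 1) * c"
    unfolding a_def rq by (simp add: power_add[symmetric] power_Suc2[symmetric] power2_eq_square algebra_simps)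
  then have "c ^ (r^2) * (6 * real r / c) ^ (r - 1) * (2 / c) = 2 * (6 * real r) ^ (r - 1) * c ^ a"
    using c(1) by (simp add: power_divide field_simps)
  also have "\<dots> \<le> 2 * 2 ^ (2 * r^2 - r - 2) * (1/2) ^ a"
  proof (intro mult_mono)
    show "(6 * real r) ^ (r - 1) \<le> 2 ^ (2 * r^2 - r - 2)"
      using of_nat_mono[OF six_mul_power_le_two_power[OF r], where 'a = real]
      by (simp only: of_nat_mult of_nat_power of_nat_numeral)
    show "c ^ a \<le> (1/2) ^ a" using c by (intro power_mono) auto
  qed (use c in auto)
  also have "\<dots> = 2 ^ (r^2) / 2"
  proof -
    have ex: "2 * r^2 - r - 2 + 2 = r^2 + a" unfolding a_def rq by (simp add: power2_eq_square)
    have "(2::real) * 2 ^ (2 * r^2 - r - 2) * 2 = 2 ^ (2 * r^2 - r - 2 + 2)" by (simp add: power_add)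
    also have "\<dots> = 2 ^ (r^2) * 2 ^ a" unfolding ex by (simp add: power_add)
    finally show ?thesis by (simp add: power_one_over field_simps)
  qed
  finally show ?thesis .
qed

lemma power_sq_mul_six_mul_div_power_mul_le_one:
  fixes c :: real
  assumes r: "3 \<le> r" and c: "0 < c" "c \<le> 1/2"
  shows "c ^ (r^2) * (6 * real r / c) ^ (r - 2) * ((real r + 1) / c) \<le> 1"
proof -
  define q where "q = r - 2"
  have rq: "r = q + 2" using r unfolding q_def by simp
  have "c ^ (r^2) = c ^ (r^2 - r + 1) * c ^ (r - 2) * c"
    unfolding rq by (simp add: power_add[symmetric] power_Suc2[symmetric] power2_eq_square algebra_simps)
  then have "c ^ (r^2) * (6 * real r / c) ^ (r - 2) * ((real r + 1) / c)
      = (6 * real r) ^ (r - 2) * (real r + 1) * c ^ (r^2 - r + 1)"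
    using c(1) by (simp add: power_divide field_simps)
  also have "\<dots> \<le> 2 ^ (r^2 - r + 1) * (1/2) ^ (r^2 - r + 1)"
  proof (intro mult_mono)
    show "(6 * real r) ^ (r - 2) * (real r + 1) \<le> 2 ^ (r^2 - r + 1)"
      using of_nat_mono[OF six_mul_power_mul_Suc_le_two_power[OF r], where 'a = real]
      by (simp only: of_nat_mult of_nat_power of_nat_add of_nat_numeral of_nat_1)
    show "c ^ (r^2 - r + 1) \<le> (1/2) ^ (r^2 - r + 1)" using c by (intro power_mono) auto
  qed (use c in auto)
  also have "\<dots> = 1" by (simp add: power_one_over)
  finally show ?thesis .
qed

text \<open>L stands for ln n.\<close>
context
  fixes c L :: real and r s B :: nat
  assumes r: "2 \<le> r" and c: "0 < c" "c \<le> 1/2" and s: "1 \<le> s"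
    and sL: "s \<le> c ^ (r^2) * L" and B: "4 * real r / c \<le> B" "B \<le> 6 * real r / c"
begin

lemma two_power_le_L: "2 ^ (r^2) \<le> L"
proof -
  have "(2::real) ^ (r^2) = 1 / (1/2) ^ (r^2)" by (simp add: power_one_over)
  also have "\<dots> \<le> 1 / c ^ (r^2)" using c by (intro divide_left_mono power_mono) auto
  also have "\<dots> \<le> L" using s sL c(1) by (simp add: field_simps)
  finally show ?thesis .
qed

lemma L_pos: "0 < L"
  using two_power_le_L by (smt (verit) zero_less_power)

lemma s_le_L: "s \<le> L"
proof -
  have "c ^ (r^2) \<le> 1" using c by (intro power_le_one) auto
  then have "c ^ (r^2) * L \<le> 1 * L" using L_pos by (intro mult_right_mono) auto
  then show ?thesis using sL by linarith
qed

lemma one_le_B: "1 \<le> real B"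
proof -
  have "4 * real r \<le> 4 * real r / c" using c r by (simp add: field_simps)
  then show ?thesis using B r by linarith
qed

lemma ln_B_le: "ln B \<le> 2 * real r + 1 / c - 1"
proof -
  have "ln B \<le> ln (6 * real r / c)" using B one_le_B by simp
  also have "\<dots> = ln (6 * real r) + ln (1 / c)" using r c by (simp add: ln_div ln_mult)
  also have "\<dots> \<le> 2 * real r + (1 / c - 1)"
    using ln_six_mul_le[OF r] ln_le_minus_one[of "1/c"] c by (intro add_mono) auto
  finally show ?thesis by simp
qed

lemma s_mul_ln_B_less: "s * ln B < c ^ (r - 1) * L"
proof -
  have "s * ln B \<le> c ^ (r^2) * L * ln B" using sL one_le_B by (intro mult_right_mono) auto
  also have "\<dots> \<le> c ^ (r^2) * L * (2 * real r + 1 / c)"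
    using ln_B_le L_pos c(1) by (intro mult_left_mono) auto
  also have "\<dots> = (c ^ (r^2) * (2 * real r + 1 / c)) * L" by simp
  also have "\<dots> < c ^ (r - 1) * L"
    using power_sq_mul_less_power[OF r c] L_pos by (intro mult_strict_right_mono) auto
  finally show ?thesis .
qed

lemma exp_powr_less_exp_div_B_power: "exp L powr (1 - c ^ (r - 1)) < exp L / real B ^ s"
proof -
  have "exp L powr (1 - c ^ (r - 1)) = exp ((1 - c ^ (r - 1)) * L)" by (simp add: powr_def)
  also have "\<dots> < exp (L - s * ln B)" using s_mul_ln_B_less by (simp add: algebra_simps)
  also have "\<dots> = exp L / real B ^ s" using one_le_B by (simp add: exp_diff exp_of_nat_mult)
  finally show ?thesis .
qed

lemma s_le_exp_div_B_power: "s \<le> exp L / real B ^ s"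
proof -
  have "c ^ (r - 1) \<le> c ^ 1" using c r by (intro power_decreasing) auto
  then have "L * c ^ (r - 1) \<le> L * (1/2)" using c L_pos by (intro mult_left_mono) auto
  then have "exp (L / 2) \<le> exp L powr (1 - c ^ (r - 1))"
    by (simp add: powr_def algebra_simps)
  moreover have "L \<le> exp (L / 2)"
  proof -
    have "1 + L / 2 + (L / 2)\<^sup>2 / 2 \<le> exp (L / 2)" using L_pos by (intro exp_lower_Taylor_quadratic) auto
    moreover have "L \<le> 1 + L / 2 + (L / 2)\<^sup>2 / 2"
      using sum_squares_ge_zero[of "L/2 - 1" 0] by (simp add: power2_eq_square algebra_simps)
    ultimately show ?thesis by linarith
  qed
  ultimately show ?thesis using exp_powr_less_exp_div_B_power s_le_L by linarith
qed

lemma s_mul_B_power_le: "s * real B ^ (r - 1) \<le> c / 2 * exp L"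
proof -
  have "s * real B ^ (r - 1) * (2 / c) \<le> c ^ (r^2) * L * (6 * real r / c) ^ (r - 1) * (2 / c)"
    using sL B(2) one_le_B c(1) L_pos by (intro mult_right_mono mult_mono power_mono) auto
  also have "\<dots> = L * (c ^ (r^2) * (6 * real r / c) ^ (r - 1) * (2 / c))" by (simp only: mult_ac)
  also have "\<dots> \<le> L * (L / 2)"
    using power_sq_mul_six_mul_div_power_le[OF r c] two_power_le_L L_pos by (intro mult_left_mono) auto
  also have "\<dots> \<le> exp L"
    using exp_lower_Taylor_quadratic[of L] L_pos by (simp add: power2_eq_square)
  finally show ?thesis using c(1) by (simp add: field_simps)
qed

lemma le_exp_div_B_power:
  assumes m: "1 \<le> m" "m \<le> s * B ^ (r - 2)" and r3: "3 \<le> r"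
  shows "m \<le> exp L / real B ^ m"
proof -
  have "c * (2 * real r) \<le> real r" using mult_right_mono[OF c(2), of "2 * real r"] by simp
  then have "1 + ln B \<le> (real r + 1) / c"
    using ln_B_le c by (simp add: field_simps)
  then have "real (s * B ^ (r - 2)) * (1 + ln B) \<le> c ^ (r^2) * L * (6 * real r / c) ^ (r - 2) * ((real r + 1) / c)"
    using sL B(2) one_le_B c(1) L_pos by (simp only: of_nat_mult of_nat_power)
      (intro mult_mono power_mono, auto)
  also have "\<dots> = L * (c ^ (r^2) * (6 * real r / c) ^ (r - 2) * ((real r + 1) / c))" by (simp only: mult_ac)
  also have "\<dots> \<le> L"
    using mult_left_mono[OF power_sq_mul_six_mul_div_power_mul_le_one[OF r3 c], of L] L_pos by simp
  finally have budget: "real (s * B ^ (r - 2)) * (1 + ln B) \<le> L" .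
  have "ln (real m) + m * ln B \<le> real m * (1 + ln B)"
    using ln_le_minus_one[of m] m(1) by (simp add: algebra_simps)
  also have "\<dots> \<le> real (s * B ^ (r - 2)) * (1 + ln B)"
    using of_nat_mono[OF m(2), where 'a = real] one_le_B by (intro mult_right_mono) auto
  finally have "exp (ln (real m) + m * ln B) \<le> exp L" using budget by simp
  then have "real m * real B ^ m \<le> exp L" using m(1) one_le_B by (simp add: exp_add exp_of_nat_mult)
  then show ?thesis using one_le_B by (simp add: field_simps)
qed

end

lemma induced_covered_configuration:
  fixes B s :: nat
  assumes M: "M \<subseteq> induced_copies r EH V E" and fV: "finite V" "V \<noteq> {}" and r: "2 \<le> r"
    and B: "1 \<le> B" and s: "1 \<le> s"
    and first: "s * B ^ (r - 1) \<le> card (rich_prefixes r V (2 / B * card V) M 1)"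
    and grow: "\<And>k. 2 \<le> k \<Longrightarrow> k < r \<Longrightarrow> s * B ^ (r - k) \<le> card V / B ^ (s * B ^ (r - k))"
    and last: "s \<le> card V / B ^ s"
  shows "\<exists>t X. card V / B ^ s \<le> t \<and>
           induced_of_type r EH V E (\<lambda>i. if i = r - 1 then t else s) X \<and>
           covers r EH E M (\<lambda>i. if i = r - 1 then t else s) X"
proof -
  let ?R = "rich_prefixes r V (2 / B * card V) M"
  define k where "k = r - 1"
  have k: "1 \<le> k" "k < r" "r = Suc k" using r unfolding k_def by auto
  have MP: "M \<subseteq> {0..<r} \<rightarrow>\<^sub>E V" using M induced_copies_subset_PiE by blast
  obtain F where F: "F \<subseteq> ?R k" "coherent r EH E M k F" "s * B \<le> card F"
    using exists_large_coherent_family[OF M fV B s first grow k(1,2)] k(3) by auto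
  then obtain J where J: "J \<subseteq> F" "card J = s"
    "card V / B ^ s \<le> card {w\<in>V. \<forall>f\<in>J. f(k := w) \<in> ?R (Suc k)}"
    using exists_subfamily_many_common_extensions[OF MP fV(1) k(2) B F(1) s] by auto
  define T where "T = {w\<in>V. \<forall>f\<in>J. f(k := w) \<in> M}"
  have T: "card V / B ^ s \<le> card T" using J(3) k(3) unfolding T_def by simp
  have "J \<subseteq> {0..<k} \<rightarrow>\<^sub>E V"
    using J(1) F(1) rich_prefixes_subset_PiE[OF MP less_imp_le[OF k(2)]] by blast
  moreover have "coherent r EH E M k J" using coherent_subset[OF F(2) J(1)] .
  moreover have "s \<le> card T" using T last by linarith
  ultimately show ?thesis
    using induced_of_type_family_classes[OF M k(3) _ _ J(2) T_def s(1)]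
      covers_family_classes[OF M k(3) _ _ J(2) T_def s(1)] k(1) T
    by (intro exI[of _ "card T"] exI[of _ "family_classes k J T"]) (simp add: k_def)
qed

lemma exists_nat_between_multiples_inverse:
  fixes c :: real and r :: nat
  assumes "0 < c" "c \<le> 1/2"
  shows "\<exists>B::nat. 4 * real r / c \<le> B \<and> B \<le> 6 * real r / c"
proof -
  define N where "N = nat \<lceil>1 / c\<rceil>"
  have N1: "1 / c \<le> N" unfolding N_def by linarith
  have "real N = \<lceil>1 / c\<rceil>" unfolding N_def using assms(1) by simp
  then have "N < 1 / c + 1" using ceiling_correct[of "1 / c"] by linarith
  moreover have "1 \<le> 1 / (2 * c)" using assms by (simp add: field_simps)
  ultimately have N2: "N \<le> 3 / (2 * c)" using assms(1) by (simp add: field_simps)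
  have "4 * real r / c \<le> real (4 * r * N)" using N1 by (simp add: divide_inverse mult_left_mono)
  moreover have "real (4 * r * N) \<le> 6 * real r / c"
    using mult_left_mono[OF N2, of "4 * real r"] assms(1) by (simp add: field_simps)
  ultimately show ?thesis by (intro exI[of _ "4 * r * N"]) simp
qed

lemma covered_configuration_of_dense_copies:
  fixes c :: real and s :: nat
  assumes M: "M \<subseteq> induced_copies r EH V E" and fV: "finite V" "V \<noteq> {}" and r: "2 \<le> r"
    and c: "0 < c" "c \<le> 1/2" and dense: "c * card V ^ r \<le> card M"
    and s: "1 \<le> s" "s \<le> c ^ (r^2) * ln (card V)"
  shows "\<exists>t X. card V powr (1 - c ^ (r - 1)) < t \<and>
           induced_of_type r EH V E (\<lambda>i. if i = r - 1 then t else s) X \<and>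
           covers r EH E M (\<lambda>i. if i = r - 1 then t else s) X"
proof -
  let ?n = "real (card V)" and ?L = "ln (card V)"
  have n: "exp ?L = ?n" using fV by (simp add: card_gt_0_iff)
  obtain B :: nat where B: "4 * real r / c \<le> B" "B \<le> 6 * real r / c"
    using exists_nat_between_multiples_inverse[OF c] by blast
  note numeric = r c s B
  have B1: "1 \<le> B" using one_le_B[OF numeric] by simp
  have "real (r - 1) * (2 / B) \<le> real r * (2 / B)" by (intro mult_right_mono) auto
  also have "\<dots> = 2 * real r / B" by simp
  also have "\<dots> \<le> 2 * real r / (4 * real r / c)"
    using B(1) B1 r c(1) by (intro divide_left_mono) (auto intro!: mult_pos_pos divide_pos_pos)
  also have "\<dots> = c / 2" using r c(1) by (simp add: field_simps)
  finally have eps: "real (r - 1) * (2 / B) \<le> c / 2" .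
  have "s * B ^ (r - 1) \<le> c / 2 * ?n" using s_mul_B_power_le[OF numeric] n by simp
  also have "\<dots> \<le> (c - real (r - 1) * (2 / B)) * ?n ^ 1"
    unfolding power_one_right by (rule mult_right_mono) (use eps in auto)
  also have "\<dots> \<le> card (rich_prefixes r V (2 / B * ?n) M 1)"
    using card_rich_prefixes_ge[OF fV subset_trans[OF M induced_copies_subset_PiE] _ dense, of "2 / B" 1] r
    by simp
  finally have first: "s * B ^ (r - 1) \<le> card (rich_prefixes r V (2 / B * ?n) M 1)"
    by (simp flip: of_nat_mult of_nat_power)
  have grow: "s * B ^ (r - k) \<le> ?n / B ^ (s * B ^ (r - k))" if "2 \<le> k" "k < r" for k
  proof -
    have "B ^ (r - k) \<le> B ^ (r - 2)" using B1 that by (intro power_increasing) auto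
    then have "s * B ^ (r - k) \<le> s * B ^ (r - 2)" by simp
    then show ?thesis
      using le_exp_div_B_power[OF numeric, of "s * B ^ (r - k)"] s(1) B1 that n by simp
  qed
  obtain t X where "?n / B ^ s \<le> t" "induced_of_type r EH V E (\<lambda>i. if i = r - 1 then t else s) X"
    "covers r EH E M (\<lambda>i. if i = r - 1 then t else s) X"
    using induced_covered_configuration[OF M fV r B1 s(1) first grow]
      s_le_exp_div_B_power[OF numeric] n by auto
  moreover have "?n powr (1 - c ^ (r - 1)) < ?n / B ^ s"
    using exp_powr_less_exp_div_B_power[OF numeric] n by simp
  ultimately show ?thesis by (intro exI[of _ t] exI[of _ X]) auto
qed

lemma le_card_of_induced_copy:
  assumes "h \<in> induced_copies r EH V E" "finite V"
  shows "r \<le> card V"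
proof -
  have "h \<in> {0..<r} \<rightarrow>\<^sub>E V" using induced_copies_subset_PiE assms(1) by blast
  then have "h ` {0..<r} \<subseteq> V" by auto
  then show ?thesis using card_inj_on_le[OF inj_on_induced_copy[OF assms(1)] _ assms(2)] by simp
qed

lemma trivial_covered_configuration:
  assumes "finite V" "2 \<le> r"
  shows "\<exists>X. induced_of_type r EH V E (\<lambda>i. if i = r - 1 then card V else 0) X \<and>
           covers r EH E M (\<lambda>i. if i = r - 1 then card V else 0) X"
proof -
  define X where "X i = (if i = r - 1 then V else {})" for i
  have "Min ((\<lambda>i. if i = r - 1 then card V else 0) ` {0..<r}) = 0"
    using assms(2) by (intro Min_eqI) (auto intro!: image_eqI[of _ _ 0])
  then have "covers r EH E M (\<lambda>i. if i = r - 1 then card V else 0) X"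
    unfolding covers_def X_def by auto
  moreover have "induced_of_type r EH V E (\<lambda>i. if i = r - 1 then card V else 0) X"
    unfolding induced_of_type_def X_def using assms(1) by auto
  ultimately show ?thesis by blast
qed

theorem theorem3:
  fixes r n :: nat and c :: real and EH :: "nat \<Rightarrow> nat \<Rightarrow> bool"
    and V :: "'a set" and E :: "'a \<Rightarrow> 'a \<Rightarrow> bool" and M :: "(nat \<Rightarrow> 'a) set"
  assumes "r \<ge> 2" and "0 < c" and "c \<le> 1/2"
    and "graph {0..<r} EH"
    and "graph V E" and "card V = n" and "n \<ge> 1"
    and "M \<subseteq> induced_copies r EH V E"
    and "real (card M) \<ge> c * real n ^ r"
  shows "\<exists>(t::nat) X. real t > real n powr (1 - c ^ (r - 1)) \<and>
           (let s = nat \<lfloor>c ^ (r^2) * ln (real n)\<rfloor>;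
                sz = (\<lambda>i. if i = r - 1 then t else s)
            in induced_of_type r EH V E sz X \<and> covers r EH E M sz X)"
proof -
  have fV: "finite V" "V \<noteq> {}" using assms(5-7) unfolding graph_def by auto
  have dense: "c * card V ^ r \<le> card M" using assms(6,9) by simp
  have "0 < c * real n ^ r" using assms(2,7) by simp
  then have "M \<noteq> {}" using assms(9) by auto
  then obtain h where "h \<in> induced_copies r EH V E" using assms(8) by blast
  then have "r \<le> n" using le_card_of_induced_copy fV(1) assms(6) by blast
  then have n: "2 \<le> n" using assms(1) by simp
  define s where "s = nat \<lfloor>c ^ (r^2) * ln (real n)\<rfloor>"
  have "\<exists>t X. real n powr (1 - c ^ (r - 1)) < t \<and>
      induced_of_type r EH V E (\<lambda>i. if i = r - 1 then t else s) X \<and>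
      covers r EH E M (\<lambda>i. if i = r - 1 then t else s) X"
  proof (cases "s = 0")
    case True
    have "real n powr (1 - c ^ (r - 1)) < real n powr 1"
      using n assms(2) by (intro powr_less_mono) auto
    moreover obtain X where "induced_of_type r EH V E (\<lambda>i. if i = r - 1 then n else 0) X"
      "covers r EH E M (\<lambda>i. if i = r - 1 then n else 0) X"
      using trivial_covered_configuration[OF fV(1) assms(1), unfolded assms(6)] by blast
    ultimately show ?thesis using n unfolding True by (intro exI[of _ n] exI[of _ X]) simp
  next
    case False
    have "0 \<le> c ^ (r^2) * ln n" using assms(2,7) by simp
    then have "s \<le> c ^ (r^2) * ln (card V)" unfolding s_def assms(6) by linarith
    with False show ?thesis
      using covered_configuration_of_dense_copies[OF assms(8) fV assms(1-3) dense] assms(6) by simp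
  qed
  then show ?thesis unfolding Let_def s_def .
qed

end
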